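(* Every $C^k$ split map $\Phi$ of the split annulus $\mathbf A$ to itself is of the form $\Phi(x,y)=(\varphi(x),\varphi(y))$, where $\varphi$ is a $C^k$ diffeomorphism of $\mathbf{RP}^1$ (a homeomorphism if $k=0$). Moreover, $\Phi$ is an isometry of $(\mathbf A,g_0)$ if and only if $\varphi$ is projective.
   Context: $\mathbf A=(\mathbf{RP}^1\times\mathbf{RP}^1)\setminus\Delta$ ($\Delta$ the diagonal) with split structure $(\mathcal L_1,\mathcal L_2)$, where $\mathcal L_i$ is the foliation by fibers of the projection to the $i$-th factor. A split map of $\mathbf A$ is a homeomorphism of $\mathbf A$ mapping each leaf of $\mathcal L_1$ onto a leaf of $\mathcal L_1$ and each leaf of $\mathcal L_2$ onto a leaf of $\mathcal L_2$; a $C^k$ split map is one that is moreover a $C^k$ diffeomorphism. $g_0$ is the de Sitter metric, $g_0=\frac{2\,\mathrm dx\,\mathrm dy}{(x-y)^2}$ in any affine chart. *)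

theory Defs
  imports "HOL-Analysis.Analysis"
begin

primrec Ck :: "nat \<Rightarrow> ('a::real_normed_vector \<Rightarrow> 'b::real_normed_vector) \<Rightarrow> 'a set \<Rightarrow> bool" where
  "Ck 0 f S = continuous_on S f"
| "Ck (Suc n) f S = ((\<forall>x\<in>S. f differentiable (at x)) \<and>
                      (\<forall>v. Ck n (\<lambda>x. frechet_derivative f (at x) v) S))"

text \<open>A point of RP^1 is modelled as an element of real option: Some x is the line [x:1],
  None is the point at infinity [1:0].\<close>
type_synonym rp1 = "real option"

text \<open>All three coordinates are affine coordinates (they differ from x by a projective
  transformation).\<close>
definition chart_dom :: "nat \<Rightarrow> rp1 set" where
  "chart_dom i = (if i = 0 then range Some
                  else if i = 1 then {p. p \<noteq> Some 0}
                  else {p. p \<noteq> Some 1})"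

definition chart :: "nat \<Rightarrow> rp1 \<Rightarrow> real" where
  "chart i p = (if i = 0 then (case p of Some x \<Rightarrow> x | None \<Rightarrow> 0)
                else if i = 1 then (case p of Some x \<Rightarrow> - 1 / x | None \<Rightarrow> 0)
                else (case p of Some x \<Rightarrow> 1 / (1 - x) | None \<Rightarrow> 0))"

definition chart_inv :: "nat \<Rightarrow> real \<Rightarrow> rp1" where
  "chart_inv i t = (if i = 0 then Some t
                    else if i = 1 then (if t = 0 then None else Some (- 1 / t))
                    else (if t = 0 then None else Some (1 - 1 / t)))"

definition charts :: "nat set" where "charts = {0, 1, 2}"

definition Ck_map_rp1 :: "nat \<Rightarrow> (rp1 \<Rightarrow> rp1) \<Rightarrow> bool" where
  "Ck_map_rp1 k f \<longleftrightarrow>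
     (\<forall>i\<in>charts. \<forall>j\<in>charts.
        open {t. f (chart_inv i t) \<in> chart_dom j} \<and>
        Ck k (\<lambda>t. chart j (f (chart_inv i t))) {t. f (chart_inv i t) \<in> chart_dom j})"

definition Ck_diffeo_rp1 :: "nat \<Rightarrow> (rp1 \<Rightarrow> rp1) \<Rightarrow> bool" where
  "Ck_diffeo_rp1 k f \<longleftrightarrow> bij f \<and> Ck_map_rp1 k f \<and> Ck_map_rp1 k (inv f)"

text \<open>Projective transformations of RP^1 (elements of PGL(2,R)), written in the affine
  coordinate: [x:1] |-> [ax+b : cx+d], [1:0] |-> [a:c].\<close>
definition mobius :: "real \<Rightarrow> real \<Rightarrow> real \<Rightarrow> real \<Rightarrow> rp1 \<Rightarrow> rp1" where
  "mobius a b c d p = (case p of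
      Some x \<Rightarrow> (if c * x + d = 0 then None else Some ((a * x + b) / (c * x + d)))
    | None \<Rightarrow> (if c = 0 then None else Some (a / c)))"

definition projective :: "(rp1 \<Rightarrow> rp1) \<Rightarrow> bool" where
  "projective f \<longleftrightarrow> (\<exists>a b c d. a * d - b * c \<noteq> 0 \<and> f = mobius a b c d)"

definition annulus :: "(rp1 \<times> rp1) set" where
  "annulus = {(p, q). p \<noteq> q}"

definition chartA_inv :: "nat \<times> nat \<Rightarrow> real \<times> real \<Rightarrow> rp1 \<times> rp1" where
  "chartA_inv ij st = (chart_inv (fst ij) (fst st), chart_inv (snd ij) (snd st))"

definition chartA :: "nat \<times> nat \<Rightarrow> rp1 \<times> rp1 \<Rightarrow> real \<times> real" where
  "chartA ij pq = (chart (fst ij) (fst pq), chart (snd ij) (snd pq))"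

definition chartA_dom :: "nat \<times> nat \<Rightarrow> (rp1 \<times> rp1) set" where
  "chartA_dom ij = annulus \<inter> (chart_dom (fst ij) \<times> chart_dom (snd ij))"

definition locdom :: "(rp1 \<times> rp1 \<Rightarrow> rp1 \<times> rp1) \<Rightarrow> nat \<times> nat \<Rightarrow> nat \<times> nat \<Rightarrow> (real \<times> real) set" where
  "locdom F ij ij' = {st. chartA_inv ij st \<in> annulus \<and> F (chartA_inv ij st) \<in> chartA_dom ij'}"

definition locexp :: "(rp1 \<times> rp1 \<Rightarrow> rp1 \<times> rp1) \<Rightarrow> nat \<times> nat \<Rightarrow> nat \<times> nat \<Rightarrow> real \<times> real \<Rightarrow> real \<times> real" where
  "locexp F ij ij' st = chartA ij' (F (chartA_inv ij st))"

definition Ck_map_A :: "nat \<Rightarrow> (rp1 \<times> rp1 \<Rightarrow> rp1 \<times> rp1) \<Rightarrow> bool" where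
  "Ck_map_A k F \<longleftrightarrow> F ` annulus \<subseteq> annulus \<and>
     (\<forall>ij\<in>charts \<times> charts. \<forall>ij'\<in>charts \<times> charts.
        open (locdom F ij ij') \<and> Ck k (locexp F ij ij') (locdom F ij ij'))"

definition Ck_diffeo_A :: "nat \<Rightarrow> (rp1 \<times> rp1 \<Rightarrow> rp1 \<times> rp1) \<Rightarrow> bool" where
  "Ck_diffeo_A k F \<longleftrightarrow> bij_betw F annulus annulus \<and> Ck_map_A k F \<and>
                        Ck_map_A k (inv_into annulus F)"

definition leaf1 :: "rp1 \<Rightarrow> (rp1 \<times> rp1) set" where
  "leaf1 p = {pq \<in> annulus. fst pq = p}"

definition leaf2 :: "rp1 \<Rightarrow> (rp1 \<times> rp1) set" where
  "leaf2 q = {pq \<in> annulus. snd pq = q}"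

definition split_map :: "(rp1 \<times> rp1 \<Rightarrow> rp1 \<times> rp1) \<Rightarrow> bool" where
  "split_map F \<longleftrightarrow> Ck_diffeo_A 0 F \<and>
     (\<forall>p. \<exists>p'. F ` leaf1 p = leaf1 p') \<and> (\<forall>q. \<exists>q'. F ` leaf2 q = leaf2 q')"

definition Ck_split_map :: "nat \<Rightarrow> (rp1 \<times> rp1 \<Rightarrow> rp1 \<times> rp1) \<Rightarrow> bool" where
  "Ck_split_map k F \<longleftrightarrow> split_map F \<and> Ck_diffeo_A k F"

text \<open>In the coordinates (s,t) of the product chart (i,i) (same affine chart on both
  factors), g0 at (s,t) applied to tangent vectors v, w is (v1 w2 + v2 w1)/(s - t)^2.\<close>
definition g0 :: "real \<times> real \<Rightarrow> real \<times> real \<Rightarrow> real \<times> real \<Rightarrow> real" where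
  "g0 st v w = (fst v * snd w + snd v * fst w) / (fst st - snd st)^2"

definition isometry_A :: "(rp1 \<times> rp1 \<Rightarrow> rp1 \<times> rp1) \<Rightarrow> bool" where
  "isometry_A F \<longleftrightarrow> Ck_diffeo_A 1 F \<and>
     (\<forall>i\<in>charts. \<forall>j\<in>charts. \<forall>st\<in>locdom F (i, i) (j, j). \<forall>v w.
        g0 (locexp F (i, i) (j, j) st)
           (frechet_derivative (locexp F (i, i) (j, j)) (at st) v)
           (frechet_derivative (locexp F (i, i) (j, j)) (at st) w)
        = g0 st v w)"

end

theory Submission
  imports Defs
begin

(* A split map permutes the leaves of both foliations, so it acts on each factor separately,
   Phi (x, y) = (phi1 x, phi2 y); since it maps the annulus onto itself, never onto the diagonal,
   phi1 = phi2 = phi, and the regularity of phi is read off from Phi on a slice y = const.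
   In an affine chart Phi preserves g0 iff phi' x * phi' z * (x - z)^2 = (phi x - phi z)^2 for all
   x /= z.  Moebius maps satisfy this; conversely, fixing y, the function
   1 / (phi x - phi y) - 1 / (phi' y * (x - y)) has derivative zero and, by the same identity
   applied to a third point, is constant even across the components of its domain.  Hence phi is
   linear fractional on the chart, and continuity and bijectivity extend this to all of RP^1. *)

section \<open>Calculus of the classes \<open>Ck\<close>\<close>

lemma Ck_transform_open:
  assumes "open S" and "\<And>x. x \<in> S \<Longrightarrow> f x = g x" and "Ck k f S"
  shows "Ck k g S"
  using assms
proof (induction k arbitrary: f g)
  case 0
  then show ?case by (auto intro: continuous_on_cong[THEN iffD1])
next
  case (Suc n)
  have deriv: "(g has_derivative frechet_derivative f (at x)) (at x)
      \<and> frechet_derivative g (at x) = frechet_derivative f (at x)" if "x \<in> S" for x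
  proof -
    have "(f has_derivative frechet_derivative f (at x)) (at x)"
      using Suc.prems that frechet_derivative_works by auto
    then have "(g has_derivative frechet_derivative f (at x)) (at x)"
      using has_derivative_transform_within_open[of f _ x UNIV S g] Suc.prems that by auto
    then show ?thesis
      using frechet_derivative_at by metis
  qed
  have "Ck n (\<lambda>x. frechet_derivative g (at x) v) S" for v
    using Suc.IH[of "\<lambda>x. frechet_derivative f (at x) v" "\<lambda>x. frechet_derivative g (at x) v"]
      Suc.prems deriv by (simp add: Ck.simps)
  then show ?case
    using deriv by (auto simp: differentiable_def)
qed

lemma Ck_localI:
  assumes "\<And>x. x \<in> S \<Longrightarrow> \<exists>T. open T \<and> x \<in> T \<and> T \<subseteq> S \<and> Ck k f T"
  shows "Ck k f S"
  using assms
proof (induction k arbitrary: f)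
  case 0
  show ?case
    unfolding Ck.simps continuous_on_eq_continuous_within
  proof
    fix x assume "x \<in> S"
    then obtain T where "open T" "x \<in> T" "continuous_on T f"
      using 0 by force
    then show "continuous (at x within S) f"
      using continuous_on_eq_continuous_at continuous_at_imp_continuous_at_within by blast
  qed
next
  case (Suc n)
  have "Ck n (\<lambda>x. frechet_derivative f (at x) v) S" for v
    by (rule Suc.IH) (use Suc.prems in \<open>metis Ck.simps(2)\<close>)
  moreover have "f differentiable (at x)" if "x \<in> S" for x
    using Suc.prems that by force
  ultimately show ?case
    by simp
qed

lemma Ck_imp_continuous_on: "Ck k f S \<Longrightarrow> continuous_on S f"
  by (cases k)
    (auto intro!: continuous_at_imp_continuous_on differentiable_imp_continuous_within)

lemma open_affine_vimage:
  fixes A :: "'a::real_normed_vector \<Rightarrow> 'b::real_normed_vector"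
  assumes "open S" and "bounded_linear A"
  shows "open {t. A t + b \<in> S}"
proof -
  have "continuous_on UNIV (\<lambda>t. A t + b)"
    by (intro continuous_intros linear_continuous_on assms)
  then show ?thesis
    using open_vimage[OF assms(1)] by (simp add: vimage_def)
qed

lemma Ck_comp_affine:
  fixes g :: "'a::real_normed_vector \<Rightarrow> 'b::real_normed_vector"
    and L :: "'b \<Rightarrow> 'c::real_normed_vector" and A :: "'d::real_normed_vector \<Rightarrow> 'a"
  assumes "open S" and "Ck k g S" and "bounded_linear L" and "bounded_linear A"
  shows "Ck k (\<lambda>t. L (g (A t + b))) {t. A t + b \<in> S}"
  using assms(2)
proof (induction k arbitrary: g)
  case 0
  have "continuous_on {t. A t + b \<in> S} (\<lambda>t. A t + b)"
    by (intro continuous_intros linear_continuous_on assms)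
  then have "continuous_on {t. A t + b \<in> S} (g \<circ> (\<lambda>t. A t + b))"
    by (rule continuous_on_compose) (use 0 in \<open>auto intro: continuous_on_subset\<close>)
  then have "continuous_on {t. A t + b \<in> S} (L \<circ> (g \<circ> (\<lambda>t. A t + b)))"
    by (rule continuous_on_compose) (intro linear_continuous_on assms)
  then show ?case
    by (simp add: o_def)
next
  case (Suc n)
  have chain: "((\<lambda>t. L (g (A t + b))) has_derivative
      (\<lambda>v. L (frechet_derivative g (at (A t + b)) (A v)))) (at t)" if "A t + b \<in> S" for t
  proof -
    have "((\<lambda>t. A t + b) has_derivative A) (at t)"
      using assms(4) by (auto intro!: derivative_eq_intros bounded_linear_imp_has_derivative)
    moreover have "(g has_derivative frechet_derivative g (at (A t + b))) (at (A t + b))"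
      using Suc.prems that frechet_derivative_works by auto
    ultimately have "((\<lambda>t. g (A t + b)) has_derivative
        (\<lambda>v. frechet_derivative g (at (A t + b)) (A v))) (at t)"
      by (rule has_derivative_compose)
    then show ?thesis
      by (rule bounded_linear.has_derivative[OF assms(3)])
  qed
  have "Ck n (\<lambda>t. L (frechet_derivative g (at (A t + b)) (A v))) {t. A t + b \<in> S}" for v
    using Suc.IH[of "\<lambda>x. frechet_derivative g (at x) (A v)"] Suc.prems by auto
  moreover have "L (frechet_derivative g (at (A x + b)) (A v))
      = frechet_derivative (\<lambda>t. L (g (A t + b))) (at x) v" if "A x + b \<in> S" for x v
    using frechet_derivative_at[OF chain[OF that]] by metis
  ultimately have "Ck n (\<lambda>x. frechet_derivative (\<lambda>t. L (g (A t + b))) (at x) v) {t. A t + b \<in> S}" for v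
    by (rule Ck_transform_open[OF open_affine_vimage[OF assms(1,4)], rotated]) auto
  moreover have "(\<lambda>t. L (g (A t + b))) differentiable (at t)" if "A t + b \<in> S" for t
    using chain[OF that] by (auto simp: differentiable_def)
  ultimately show ?case
    by simp
qed

lemma Ck_slice:
  fixes G :: "real \<times> real \<Rightarrow> 'a::real_normed_vector \<times> 'b::real_normed_vector"
  assumes "open D" and "Ck k G D"
  shows "open {t. (t, s) \<in> D} \<and> Ck k (\<lambda>t. fst (G (t, s))) {t. (t, s) \<in> D}"
proof -
  have lin: "bounded_linear (\<lambda>t::real. (t, 0::real))"
    by (intro bounded_linear_Pair bounded_linear_ident bounded_linear_zero)
  show ?thesis
    using open_affine_vimage[OF assms(1) lin, of "(0, s)"]
      Ck_comp_affine[OF assms bounded_linear_fst lin, of "(0, s)"] by simp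
qed

declare Ck.simps [simp del]

lemma has_derivative_prod_map:
  fixes r1 r2 :: "real \<Rightarrow> real"
  assumes "(r1 has_derivative D1) (at s)" and "(r2 has_derivative D2) (at t)"
  shows "((\<lambda>x. (r1 (fst x), r2 (snd x))) has_derivative (\<lambda>v. (D1 (fst v), D2 (snd v)))) (at (s, t))"
proof -
  have "((\<lambda>x. r1 (fst x)) has_derivative (\<lambda>v. D1 (fst v))) (at (s, t))"
    using has_derivative_compose[OF has_derivative_fst[OF has_derivative_ident], of r1 D1 "(s, t)"]
      assms(1) by simp
  moreover have "((\<lambda>x. r2 (snd x)) has_derivative (\<lambda>v. D2 (snd v))) (at (s, t))"
    using has_derivative_compose[OF has_derivative_snd[OF has_derivative_ident], of r2 D2 "(s, t)"]
      assms(2) by simp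
  ultimately show ?thesis
    by (rule has_derivative_Pair)
qed

lemma Ck_1_prod_map:
  fixes r1 r2 :: "real \<Rightarrow> real"
  assumes r1: "Ck 1 r1 O1" and r2: "Ck 1 r2 O2" and "open D" and D: "D \<subseteq> O1 \<times> O2"
  shows "Ck 1 (\<lambda>x. (r1 (fst x), r2 (snd x))) D"
proof -
  let ?D' = "\<lambda>x v. (frechet_derivative r1 (at (fst x)) (fst v), frechet_derivative r2 (at (snd x)) (snd v))"
  have deriv: "((\<lambda>x. (r1 (fst x), r2 (snd x))) has_derivative ?D' x) (at x)" if "x \<in> D" for x
  proof -
    have "r1 differentiable (at (fst x))" "r2 differentiable (at (snd x))"
      using that D r1 r2 by (auto simp: Ck.simps One_nat_def)
    then have "((\<lambda>x. (r1 (fst x), r2 (snd x))) has_derivative ?D' x) (at (fst x, snd x))"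
      by (intro has_derivative_prod_map) (simp_all add: frechet_derivative_works)
    then show ?thesis
      by simp
  qed
  have "continuous_on D (\<lambda>x. ?D' x v)" for v
  proof (intro continuous_on_Pair)
    have "continuous_on O1 (\<lambda>s. frechet_derivative r1 (at s) (fst v))"
      and "continuous_on O2 (\<lambda>s. frechet_derivative r2 (at s) (snd v))"
      using r1 r2 by (simp_all add: Ck.simps One_nat_def)
    moreover have "fst ` D \<subseteq> O1" and "snd ` D \<subseteq> O2"
      using D by auto
    ultimately show "continuous_on D (\<lambda>x. frechet_derivative r1 (at (fst x)) (fst v))"
      and "continuous_on D (\<lambda>x. frechet_derivative r2 (at (snd x)) (snd v))"
      by (auto intro: continuous_on_compose2[OF _ continuous_on_fst[OF continuous_on_id]]
          continuous_on_compose2[OF _ continuous_on_snd[OF continuous_on_id]])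
  qed
  moreover have "frechet_derivative (\<lambda>x. (r1 (fst x), r2 (snd x))) (at x) = ?D' x" if "x \<in> D" for x
    using frechet_derivative_at[OF deriv[OF that]] by simp
  ultimately have "continuous_on D (\<lambda>x. frechet_derivative (\<lambda>x. (r1 (fst x), r2 (snd x))) (at x) v)" for v
    by (metis (no_types, lifting) continuous_on_eq)
  moreover have "(\<lambda>x. (r1 (fst x), r2 (snd x))) differentiable (at x)" if "x \<in> D" for x
    using deriv[OF that] by (auto simp: differentiable_def)
  ultimately show ?thesis
    by (simp add: Ck.simps One_nat_def)
qed

lemma has_real_derivative_linear_fractional:
  fixes a b c d t :: real
  assumes "c * t + d \<noteq> 0"
  shows "((\<lambda>t. (a * t + b) / (c * t + d)) has_real_derivative (a * d - b * c) / (c * t + d)^2) (at t)"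
proof -
  have "((\<lambda>t. (a * t + b) / (c * t + d)) has_real_derivative
      (a * (c * t + d) - (a * t + b) * c) / (c * t + d)^2) (at t)"
    using assms by (auto intro!: derivative_eq_intros simp: power2_eq_square)
  moreover have "a * (c * t + d) - (a * t + b) * c = a * d - b * c"
    by algebra
  ultimately show ?thesis
    by simp
qed

lemma Ck_1_linear_fractional:
  fixes a b c d :: real
  shows "Ck 1 (\<lambda>t. (a * t + b) / (c * t + d)) {t. c * t + d \<noteq> 0}"
proof -
  let ?f = "\<lambda>t. (a * t + b) / (c * t + d)"
  have deriv: "(?f has_derivative (*) ((a * d - b * c) / (c * t + d)^2)) (at t)"
    if "c * t + d \<noteq> 0" for t
    by (rule has_field_derivative_imp_has_derivative[OF has_real_derivative_linear_fractional[OF that]])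
  have "continuous_on {t. c * t + d \<noteq> 0} (\<lambda>t. (a * d - b * c) / (c * t + d)^2 * v)" for v
    by (intro continuous_intros) auto
  then have "continuous_on {t. c * t + d \<noteq> 0} (\<lambda>t. frechet_derivative ?f (at t) v)" for v
    by (rule continuous_on_eq) (use frechet_derivative_at[OF deriv] in simp)
  then show ?thesis
    using deriv by (auto simp: Ck.simps differentiable_def)
qed

section \<open>Charts and projective maps of the projective line\<close>

lemma chart_inv_inj: "i \<in> charts \<Longrightarrow> chart_inv i t = chart_inv i s \<Longrightarrow> t = s"
  by (auto simp: charts_def chart_inv_def split: if_splits)

lemma chart_inv_chart: "i \<in> charts \<Longrightarrow> p \<in> chart_dom i \<Longrightarrow> chart_inv i (chart i p) = p"
  by (cases p) (auto simp: charts_def chart_dom_def chart_def chart_inv_def)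

lemma chart_inj_on: "i \<in> charts \<Longrightarrow> inj_on (chart i) (chart_dom i)"
  by (metis chart_inv_chart inj_onI)

lemma ex_common_chart_dom: "\<exists>j\<in>charts. p \<in> chart_dom j \<and> q \<in> chart_dom j"
proof -
  consider "p \<noteq> None" "q \<noteq> None" | "p \<noteq> Some 0" "q \<noteq> Some 0" | "p \<noteq> Some 1" "q \<noteq> Some 1"
    by force
  then show ?thesis
    by cases (auto simp: charts_def chart_dom_def)
qed

(* The point [u : v] in homogeneous coordinates; homog 0 0 = None is a junk value. *)
definition homog :: "real \<Rightarrow> real \<Rightarrow> rp1" where
  "homog u v = (if v = 0 then None else Some (u / v))"

lemma ex_homog: "\<exists>u v. (u, v) \<noteq> (0, 0) \<and> p = homog u v"
proof (cases p)
  case None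
  then show ?thesis
    by (intro exI[of _ 1] exI[of _ 0]) (simp add: homog_def)
next
  case (Some x)
  then show ?thesis
    by (intro exI[of _ x] exI[of _ 1]) (simp add: homog_def)
qed

lemma mobius_homog:
  assumes "(u, v) \<noteq> (0, 0)"
  shows "mobius a b c d (homog u v) = homog (a * u + b * v) (c * u + d * v)"
proof (cases "v = 0")
  case True
  then show ?thesis
    using assms by (simp add: homog_def mobius_def)
next
  case False
  have "c * (u / v) + d = (c * u + d * v) / v" and "a * (u / v) + b = (a * u + b * v) / v"
    using False by (simp_all add: field_simps)
  then show ?thesis
    using False by (simp add: homog_def mobius_def)
qed

lemma mobius_comp:
  fixes a b c d a' b' c' d' :: real
  assumes "a' * d' - b' * c' \<noteq> 0"
  shows "mobius a b c d (mobius a' b' c' d' p) =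
         mobius (a * a' + b * c') (a * b' + b * d') (c * a' + d * c') (c * b' + d * d') p"
proof -
  obtain u v where uv: "(u, v) \<noteq> (0, 0)" and p: "p = homog u v"
    using ex_homog by blast
  have "(a' * u + b' * v, c' * u + d' * v) \<noteq> (0, 0)"
  proof
    assume "(a' * u + b' * v, c' * u + d' * v) = (0, 0)"
    then have "a' * u + b' * v = 0" and "c' * u + d' * v = 0"
      by simp_all
    moreover have "(a' * d' - b' * c') * u = d' * (a' * u + b' * v) - b' * (c' * u + d' * v)"
      and "(a' * d' - b' * c') * v = a' * (c' * u + d' * v) - c' * (a' * u + b' * v)"
      by algebra+
    ultimately show False
      using assms uv by simp
  qed
  then show ?thesis
    unfolding p using uv by (simp add: mobius_homog algebra_simps)
qed

lemma mobius_scalar: "(e::real) \<noteq> 0 \<Longrightarrow> mobius e 0 0 e p = p"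
  by (cases p) (auto simp: mobius_def)

lemma mobius_adjugate:
  assumes "a * d - b * c \<noteq> (0::real)"
  shows "mobius d (-b) (-c) a (mobius a b c d p) = p"
    and "mobius a b c d (mobius d (-b) (-c) a p) = p"
  using assms mobius_scalar[OF assms]
  by (simp_all add: mobius_comp algebra_simps)

lemma projective_mobius: "a * d - b * c \<noteq> 0 \<Longrightarrow> projective (mobius a b c d)"
  unfolding projective_def by blast

lemma projective_bij: "projective \<phi> \<Longrightarrow> bij \<phi>"
proof -
  assume "projective \<phi>"
  then obtain a b c d where det: "a * d - b * c \<noteq> 0" and \<phi>: "\<phi> = mobius a b c d"
    unfolding projective_def by blast
  show "bij \<phi>"
    by (rule o_bij[of "mobius d (-b) (-c) a"]) (use mobius_adjugate[OF det] in \<open>auto simp: \<phi>\<close>)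
qed

lemma projective_inv: "projective \<phi> \<Longrightarrow> projective (inv \<phi>)"
proof -
  assume "projective \<phi>"
  then obtain a b c d where det: "a * d - b * c \<noteq> 0" and \<phi>: "\<phi> = mobius a b c d"
    unfolding projective_def by blast
  have "inv \<phi> = mobius d (-b) (-c) a"
    using mobius_adjugate[OF det] by (intro inv_equality) (auto simp: \<phi>)
  moreover have "d * a - (-b) * (-c) \<noteq> 0"
    using det by (simp add: algebra_simps)
  ultimately show ?thesis
    unfolding projective_def by blast
qed

lemma projective_comp: "projective \<phi> \<Longrightarrow> projective \<psi> \<Longrightarrow> projective (\<phi> \<circ> \<psi>)"
proof -
  assume "projective \<phi>" "projective \<psi>"
  then obtain a b c d a' b' c' d' where det: "a * d - b * c \<noteq> 0" "a' * d' - b' * c' \<noteq> 0"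
    and "\<phi> = mobius a b c d" "\<psi> = mobius a' b' c' d'"
    unfolding projective_def by blast
  moreover have "(a * a' + b * c') * (c * b' + d * d') - (a * b' + b * d') * (c * a' + d * c')
      = (a * d - b * c) * (a' * d' - b' * c')"
    by algebra
  ultimately show ?thesis
    unfolding projective_def using mobius_comp[OF det(2)]
    by (intro exI[of _ "a * a' + b * c'"] exI[of _ "a * b' + b * d'"] exI[of _ "c * a' + d * c'"]
        exI[of _ "c * b' + d * d'"]) (simp add: fun_eq_iff)
qed

lemma chart_inv_projective: "i \<in> charts \<Longrightarrow> \<exists>M. projective M \<and> (\<forall>t. chart_inv i t = M (Some t))"
proof -
  assume "i \<in> charts"
  then consider "i = 0" | "i = 1" | "i = 2"
    by (auto simp: charts_def)
  then show ?thesis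
  proof cases
    case 1
    then show ?thesis
      by (intro exI[of _ "mobius 1 0 0 1"]) (auto simp: projective_mobius chart_inv_def mobius_def)
  next
    case 2
    then show ?thesis
      by (intro exI[of _ "mobius 0 (-1) 1 0"]) (auto simp: projective_mobius chart_inv_def mobius_def)
  next
    case 3
    then show ?thesis
      by (intro exI[of _ "mobius 1 (-1) 1 0"])
        (auto simp: projective_mobius chart_inv_def mobius_def field_simps)
  qed
qed

lemma chart_projective:
  "j \<in> charts \<Longrightarrow> \<exists>M. projective M \<and> (\<forall>p. M p = (if p \<in> chart_dom j then Some (chart j p) else None))"
proof -
  assume "j \<in> charts"
  then consider "j = 0" | "j = 1" | "j = 2"
    by (auto simp: charts_def)
  then show ?thesis
  proof cases
    case 1
    then show ?thesis
      by (intro exI[of _ "mobius 1 0 0 1"])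
        (auto simp: projective_mobius chart_dom_def chart_def mobius_def split: option.splits)
  next
    case 2
    then show ?thesis
      by (intro exI[of _ "mobius 0 (-1) 1 0"])
        (auto simp: projective_mobius chart_dom_def chart_def mobius_def split: option.splits)
  next
    case 3
    then show ?thesis
      by (intro exI[of _ "mobius 0 1 (-1) 1"])
        (auto simp: projective_mobius chart_dom_def chart_def mobius_def split: option.splits)
  qed
qed

lemma projective_in_charts:
  assumes "projective \<phi>" and "i \<in> charts" and "j \<in> charts"
  obtains a b c d :: real where "a * d - b * c \<noteq> 0"
    and "\<And>t. \<phi> (chart_inv i t) \<in> chart_dom j \<longleftrightarrow> c * t + d \<noteq> 0"
    and "\<And>t. c * t + d \<noteq> 0 \<Longrightarrow> chart j (\<phi> (chart_inv i t)) = (a * t + b) / (c * t + d)"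
proof -
  obtain M1 where M1: "projective M1" "\<And>t. chart_inv i t = M1 (Some t)"
    using chart_inv_projective[OF assms(2)] by blast
  obtain M2 where M2: "projective M2" "\<And>p. M2 p = (if p \<in> chart_dom j then Some (chart j p) else None)"
    using chart_projective[OF assms(3)] by blast
  obtain a b c d where det: "a * d - b * c \<noteq> 0" and M: "M2 \<circ> \<phi> \<circ> M1 = mobius a b c d"
    using projective_comp[OF projective_comp[OF M2(1) assms(1)] M1(1)] unfolding projective_def by blast
  have "M2 (\<phi> (chart_inv i t)) = mobius a b c d (Some t)" for t
    using M M1(2) by (metis comp_apply)
  then have eq: "(if \<phi> (chart_inv i t) \<in> chart_dom j then Some (chart j (\<phi> (chart_inv i t))) else None)
      = (if c * t + d = 0 then None else Some ((a * t + b) / (c * t + d)))" for t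
    by (simp add: M2(2) mobius_def)
  show ?thesis
  proof (rule that[OF det])
    show "\<phi> (chart_inv i t) \<in> chart_dom j \<longleftrightarrow> c * t + d \<noteq> 0" for t
      using eq[of t] by (auto split: if_splits)
    show "chart j (\<phi> (chart_inv i t)) = (a * t + b) / (c * t + d)" if "c * t + d \<noteq> 0" for t
      using eq[of t] that by (auto split: if_splits)
  qed
qed

lemma projective_Ck_1: "projective \<phi> \<Longrightarrow> Ck_map_rp1 1 \<phi>"
  unfolding Ck_map_rp1_def
proof (intro ballI)
  fix i j assume "projective \<phi>" "i \<in> charts" "j \<in> charts"
  then obtain a b c d :: real where "a * d - b * c \<noteq> 0"
    and dom: "\<And>t. \<phi> (chart_inv i t) \<in> chart_dom j \<longleftrightarrow> c * t + d \<noteq> 0"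
    and val: "\<And>t. c * t + d \<noteq> 0 \<Longrightarrow> chart j (\<phi> (chart_inv i t)) = (a * t + b) / (c * t + d)"
    by (metis projective_in_charts)
  have "open {t::real. c * t + d \<noteq> 0}"
    by (intro open_Collect_neq continuous_intros)
  moreover from this have "Ck 1 (\<lambda>t. chart j (\<phi> (chart_inv i t))) {t. c * t + d \<noteq> 0}"
    by (rule Ck_transform_open) (use val Ck_1_linear_fractional in auto)
  ultimately show "open {t. \<phi> (chart_inv i t) \<in> chart_dom j} \<and>
      Ck 1 (\<lambda>t. chart j (\<phi> (chart_inv i t))) {t. \<phi> (chart_inv i t) \<in> chart_dom j}"
    by (simp add: dom)
qed

section \<open>Split maps are diagonal\<close>

lemma ex_point_avoiding: "\<exists>r::rp1. r \<noteq> p \<and> r \<noteq> q"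
proof -
  have "\<exists>r\<in>{None, Some 0, Some 1}. r \<noteq> p \<and> r \<noteq> q"
    by (cases "p = None"; cases "q = None") auto
  then show ?thesis
    by blast
qed

lemma split_map_product_form:
  assumes "split_map F"
  obtains \<phi>1 \<phi>2 where "\<And>x y. (x, y) \<in> annulus \<Longrightarrow> F (x, y) = (\<phi>1 x, \<phi>2 y)"
proof -
  obtain \<phi>1 \<phi>2 where leaves: "\<And>p. F ` leaf1 p = leaf1 (\<phi>1 p)" "\<And>q. F ` leaf2 q = leaf2 (\<phi>2 q)"
    using assms unfolding split_map_def by metis
  have "F (x, y) = (\<phi>1 x, \<phi>2 y)" if "(x, y) \<in> annulus" for x y
  proof -
    have "(x, y) \<in> leaf1 x" and "(x, y) \<in> leaf2 y"
      using that by (simp_all add: leaf1_def leaf2_def)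
    then have "F (x, y) \<in> leaf1 (\<phi>1 x)" and "F (x, y) \<in> leaf2 (\<phi>2 y)"
      using leaves by blast+
    then show ?thesis
      by (simp add: leaf1_def leaf2_def prod_eq_iff)
  qed
  then show ?thesis
    by (rule that)
qed

lemma product_form_bij_diagonal:
  assumes F: "bij_betw F annulus annulus"
    and \<phi>: "\<And>x y. (x, y) \<in> annulus \<Longrightarrow> F (x, y) = (\<phi>1 x, \<phi>2 y)"
  shows "bij \<phi>1" and "\<phi>2 = \<phi>1"
proof -
  have surj: "\<exists>x y. (x, y) \<in> annulus \<and> \<phi>1 x = p \<and> \<phi>2 y = q" if "p \<noteq> q" for p q
  proof -
    have "(p, q) \<in> F ` annulus"
      using F that by (simp add: bij_betw_def annulus_def)
    then show ?thesis
      using \<phi> by fastforce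
  qed
  show "\<phi>2 = \<phi>1"
  proof
    fix x
    show "\<phi>2 x = \<phi>1 x"
    proof (rule ccontr)
      assume "\<phi>2 x \<noteq> \<phi>1 x"
      then obtain z where "\<phi>1 z = \<phi>2 x"
        using surj[of "\<phi>2 x" "\<phi>1 x"] by blast
      moreover from this have "(z, x) \<in> annulus"
        using \<open>\<phi>2 x \<noteq> \<phi>1 x\<close> by (auto simp: annulus_def)
      ultimately have "F (z, x) \<notin> annulus"
        using \<phi> by (simp add: annulus_def)
      then show False
        using F \<open>(z, x) \<in> annulus\<close> by (auto simp: bij_betw_def)
    qed
  qed
  have "inj \<phi>1"
  proof
    fix x x' assume "\<phi>1 x = \<phi>1 x'"
    obtain y where y: "y \<noteq> x" "y \<noteq> x'"
      using ex_point_avoiding by blast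
    then have "F (x, y) = F (x', y)" and "(x, y) \<in> annulus" and "(x', y) \<in> annulus"
      using \<phi> \<open>\<phi>1 x = \<phi>1 x'\<close> by (auto simp: annulus_def)
    then show "x = x'"
      using F by (auto simp: bij_betw_def inj_on_def)
  qed
  moreover have "p \<in> range \<phi>1" for p
    using surj[of p] ex_point_avoiding[of p p] by blast
  then have "surj \<phi>1"
    by blast
  ultimately show "bij \<phi>1"
    by (simp add: bij_def)
qed

lemma split_map_diagonal:
  assumes "split_map F"
  obtains \<phi> where "bij \<phi>" and "\<forall>(x, y)\<in>annulus. F (x, y) = (\<phi> x, \<phi> y)"
proof -
  have F: "bij_betw F annulus annulus"
    using assms by (simp add: split_map_def Ck_diffeo_A_def)
  obtain \<phi>1 \<phi>2 where \<phi>: "\<And>x y. (x, y) \<in> annulus \<Longrightarrow> F (x, y) = (\<phi>1 x, \<phi>2 y)"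
    using split_map_product_form[OF assms] by blast
  show ?thesis
    by (rule that[OF product_form_bij_diagonal(1)[OF F \<phi>]])
      (use product_form_bij_diagonal(2)[OF F \<phi>] \<phi> in auto)
qed

section \<open>Regularity of diagonal maps\<close>

lemma inv_into_annulus_diagonal:
  assumes "bij \<phi>" and \<Phi>: "\<forall>(x, y)\<in>annulus. \<Phi> (x, y) = (\<phi> x, \<phi> y)"
    and "bij_betw \<Phi> annulus annulus"
  shows "\<forall>(x, y)\<in>annulus. inv_into annulus \<Phi> (x, y) = (inv \<phi> x, inv \<phi> y)"
proof (clarify)
  fix x y assume xy: "(x, y) \<in> annulus"
  have inv_xy: "(inv \<phi> x, inv \<phi> y) \<in> annulus"
    using xy bij_imp_bij_inv[OF assms(1)] by (auto simp: annulus_def bij_def inj_def)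
  moreover have "\<Phi> (inv \<phi> x, inv \<phi> y) = (x, y)"
    using \<Phi> inv_xy surj_f_inv_f[OF bij_is_surj[OF assms(1)]] by auto
  ultimately show "inv_into annulus \<Phi> (x, y) = (inv \<phi> x, inv \<phi> y)"
    using inv_into_f_f[of \<Phi> annulus] assms(3) by (metis bij_betw_def)
qed

lemma locexp_diagonal:
  assumes \<Phi>: "\<forall>(x, y)\<in>annulus. \<Phi> (x, y) = (\<phi> x, \<phi> y)" and st: "st \<in> locdom \<Phi> (i, i') (j, j')"
  shows "locexp \<Phi> (i, i') (j, j') st
      = (chart j (\<phi> (chart_inv i (fst st))), chart j' (\<phi> (chart_inv i' (snd st))))"
    and "\<phi> (chart_inv i (fst st)) \<in> chart_dom j" and "\<phi> (chart_inv i' (snd st)) \<in> chart_dom j'"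
    and "chart_inv i (fst st) \<noteq> chart_inv i' (snd st)"
proof -
  have "(chart_inv i (fst st), chart_inv i' (snd st)) \<in> annulus"
    and dom: "\<Phi> (chart_inv i (fst st), chart_inv i' (snd st)) \<in> chartA_dom (j, j')"
    using st by (auto simp: locdom_def chartA_inv_def)
  moreover from this have "\<Phi> (chart_inv i (fst st), chart_inv i' (snd st))
      = (\<phi> (chart_inv i (fst st)), \<phi> (chart_inv i' (snd st)))"
    using \<Phi> by auto
  ultimately show "locexp \<Phi> (i, i') (j, j') st
      = (chart j (\<phi> (chart_inv i (fst st))), chart j' (\<phi> (chart_inv i' (snd st))))"
    and "\<phi> (chart_inv i (fst st)) \<in> chart_dom j" and "\<phi> (chart_inv i' (snd st)) \<in> chart_dom j'"
    and "chart_inv i (fst st) \<noteq> chart_inv i' (snd st)"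
    by (simp_all add: locexp_def chartA_def chartA_inv_def chartA_dom_def annulus_def)
qed

lemma inj_of_diagonal:
  assumes "\<Phi> ` annulus \<subseteq> annulus" and diag: "\<forall>(x, y)\<in>annulus. \<Phi> (x, y) = (\<phi> x, \<phi> y)"
  shows "inj \<phi>"
proof
  fix x y assume "\<phi> x = \<phi> y"
  show "x = y"
  proof (rule ccontr)
    assume "x \<noteq> y"
    then have "(x, y) \<in> annulus"
      by (simp add: annulus_def)
    moreover have "\<Phi> (x, y) = (\<phi> x, \<phi> y)"
      using diag \<open>(x, y) \<in> annulus\<close> by auto
    ultimately have "(\<phi> x, \<phi> y) \<in> annulus"
      using assms(1) by force
    then show False
      using \<open>\<phi> x = \<phi> y\<close> by (simp add: annulus_def)
  qed
qed

lemma mem_locdom_diagonal: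
  assumes diag: "\<forall>(x, y)\<in>annulus. \<Phi> (x, y) = (\<phi> x, \<phi> y)" and "inj \<phi>"
    and "chart_inv i s \<noteq> chart_inv i' t"
    and "\<phi> (chart_inv i s) \<in> chart_dom j" and "\<phi> (chart_inv i' t) \<in> chart_dom j'"
  shows "(s, t) \<in> locdom \<Phi> (i, i') (j, j')"
proof -
  have ann: "(chart_inv i s, chart_inv i' t) \<in> annulus"
    using assms(3) by (simp add: annulus_def)
  moreover have "(\<phi> (chart_inv i s), \<phi> (chart_inv i' t)) \<in> annulus"
    using assms(2,3) by (auto simp: annulus_def inj_def)
  moreover have "\<Phi> (chart_inv i s, chart_inv i' t) = (\<phi> (chart_inv i s), \<phi> (chart_inv i' t))"
    using diag ann by auto
  ultimately show ?thesis
    using assms(4,5) by (simp add: locdom_def chartA_inv_def chartA_dom_def)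
qed

lemma Ck_map_rp1_of_diagonal:
  assumes \<Phi>: "Ck_map_A k \<Phi>" and diag: "\<forall>(x, y)\<in>annulus. \<Phi> (x, y) = (\<phi> x, \<phi> y)"
  shows "Ck_map_rp1 k \<phi>"
  unfolding Ck_map_rp1_def
proof (intro ballI)
  fix i j assume i: "i \<in> charts" and j: "j \<in> charts"
  have inj: "inj \<phi>"
    using \<Phi> diag by (intro inj_of_diagonal) (auto simp: Ck_map_A_def)
  define Dom where "Dom = {t. \<phi> (chart_inv i t) \<in> chart_dom j}"
  define h where "h t = chart j (\<phi> (chart_inv i t))" for t
  have "\<exists>W. open W \<and> t0 \<in> W \<and> W \<subseteq> Dom \<and> Ck k h W" if t0: "t0 \<in> Dom" for t0
  proof -
    define s where "s = t0 + 1"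
    obtain j' where j': "j' \<in> charts" "\<phi> (chart_inv i s) \<in> chart_dom j'"
      using ex_common_chart_dom by blast
    define D where "D = locdom \<Phi> (i, i) (j, j')"
    have "open D" and "Ck k (locexp \<Phi> (i, i) (j, j')) D"
      using \<Phi> i j j' unfolding Ck_map_A_def D_def by auto
    then have W: "open {t. (t, s) \<in> D}" "Ck k (\<lambda>t. fst (locexp \<Phi> (i, i) (j, j') (t, s))) {t. (t, s) \<in> D}"
      using Ck_slice by blast+
    have slice: "\<phi> (chart_inv i t) \<in> chart_dom j \<and> fst (locexp \<Phi> (i, i) (j, j') (t, s)) = h t"
      if "(t, s) \<in> D" for t
      using locexp_diagonal[OF diag, of "(t, s)"] that by (simp add: D_def h_def)
    have "chart_inv i t0 \<noteq> chart_inv i s"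
      using chart_inv_inj[OF i, of t0 s] by (auto simp: s_def)
    then have "(t0, s) \<in> D"
      unfolding D_def using mem_locdom_diagonal[OF diag inj] t0 j' by (simp add: Dom_def)
    moreover have "Ck k h {t. (t, s) \<in> D}"
      by (rule Ck_transform_open[OF W(1) _ W(2)]) (simp add: slice)
    ultimately show ?thesis
      using W slice by (intro exI[of _ "{t. (t, s) \<in> D}"]) (auto simp: Dom_def)
  qed
  then have "open Dom" and "Ck k h Dom"
    by (auto simp: open_subopen[of Dom] intro: Ck_localI)
  then show "open {t. \<phi> (chart_inv i t) \<in> chart_dom j} \<and>
      Ck k (\<lambda>t. chart j (\<phi> (chart_inv i t))) {t. \<phi> (chart_inv i t) \<in> chart_dom j}"
    by (simp add: Dom_def h_def[abs_def])
qed

lemma Ck_map_rp1_affine_chart: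
  assumes "Ck_map_rp1 k \<phi>" and "j \<in> charts"
  shows "open {t. \<phi> (Some t) \<in> chart_dom j}"
    and "Ck k (\<lambda>t. chart j (\<phi> (Some t))) {t. \<phi> (Some t) \<in> chart_dom j}"
proof -
  have "0 \<in> charts"
    by (simp add: charts_def)
  then have "open {t. \<phi> (chart_inv 0 t) \<in> chart_dom j}"
    and "Ck k (\<lambda>t. chart j (\<phi> (chart_inv 0 t))) {t. \<phi> (chart_inv 0 t) \<in> chart_dom j}"
    using assms unfolding Ck_map_rp1_def by blast+
  moreover have "chart_inv 0 = Some"
    by (auto simp: chart_inv_def)
  ultimately show "open {t. \<phi> (Some t) \<in> chart_dom j}"
    and "Ck k (\<lambda>t. chart j (\<phi> (Some t))) {t. \<phi> (Some t) \<in> chart_dom j}"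
    by simp_all
qed

lemma Ck_1_map_A_of_diagonal:
  assumes \<phi>: "Ck_map_rp1 1 \<phi>" and diag: "\<forall>(x, y)\<in>annulus. \<Phi> (x, y) = (\<phi> x, \<phi> y)"
    and "\<Phi> ` annulus \<subseteq> annulus"
    and "\<forall>ij\<in>charts \<times> charts. \<forall>ij'\<in>charts \<times> charts. open (locdom \<Phi> ij ij')"
  shows "Ck_map_A 1 \<Phi>"
  unfolding Ck_map_A_def
proof (intro conjI ballI assms(3))
  fix ij ij' assume ij: "ij \<in> charts \<times> charts" and ij': "ij' \<in> charts \<times> charts"
  obtain i i' j j' where ii: "ij = (i, i')" and jj: "ij' = (j, j')"
    by fastforce
  show D: "open (locdom \<Phi> ij ij')"
    using assms(4) ij ij' by blast
  have "Ck 1 (\<lambda>t. chart j (\<phi> (chart_inv i t))) {t. \<phi> (chart_inv i t) \<in> chart_dom j}"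
    and "Ck 1 (\<lambda>t. chart j' (\<phi> (chart_inv i' t))) {t. \<phi> (chart_inv i' t) \<in> chart_dom j'}"
    using \<phi> ij ij' unfolding Ck_map_rp1_def ii jj by auto
  then have "Ck 1 (\<lambda>x. (chart j (\<phi> (chart_inv i (fst x))), chart j' (\<phi> (chart_inv i' (snd x)))))
      (locdom \<Phi> ij ij')"
    by (rule Ck_1_prod_map[OF _ _ D]) (auto simp: ii jj dest: locexp_diagonal(2,3)[OF diag])
  then show "Ck 1 (locexp \<Phi> ij ij') (locdom \<Phi> ij ij')"
    by (rule Ck_transform_open[OF D, rotated]) (simp add: ii jj locexp_diagonal(1)[OF diag])
qed

section \<open>Projective maps are isometries\<close>

lemma g0_linear_fractional:
  fixes a b c d s t :: real
  assumes "s \<noteq> t" and "c * s + d \<noteq> 0" and "c * t + d \<noteq> 0" and "a * d - b * c \<noteq> 0"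
  shows "g0 ((a * s + b) / (c * s + d), (a * t + b) / (c * t + d))
      ((a * d - b * c) / (c * s + d)^2 * v1, (a * d - b * c) / (c * t + d)^2 * v2)
      ((a * d - b * c) / (c * s + d)^2 * w1, (a * d - b * c) / (c * t + d)^2 * w2)
    = g0 (s, t) (v1, v2) (w1, w2)"
proof -
  define P Q \<Delta> where "P = c * s + d" and "Q = c * t + d" and "\<Delta> = a * d - b * c"
  have "P \<noteq> 0" "Q \<noteq> 0" "\<Delta> \<noteq> 0" "s - t \<noteq> 0"
    using assms by (simp_all add: P_def Q_def \<Delta>_def)
  have "(a * s + b) * Q - (a * t + b) * P = \<Delta> * (s - t)"
    unfolding P_def Q_def \<Delta>_def by algebra
  then have diff: "(a * s + b) / P - (a * t + b) / Q = \<Delta> * (s - t) / (P * Q)"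
    using \<open>P \<noteq> 0\<close> \<open>Q \<noteq> 0\<close> by (simp add: field_simps)
  have "(\<Delta> / P^2 * v1 * (\<Delta> / Q^2 * w2) + \<Delta> / Q^2 * v2 * (\<Delta> / P^2 * w1)) / (\<Delta> * (s - t) / (P * Q))^2
      = (\<Delta>^2 / (P^2 * Q^2) * (v1 * w2 + v2 * w1)) / (\<Delta>^2 / (P^2 * Q^2) * (s - t)^2)"
    by (simp add: power2_eq_square add_divide_distrib algebra_simps)
  also have "\<dots> = (v1 * w2 + v2 * w1) / (s - t)^2"
    using \<open>P \<noteq> 0\<close> \<open>Q \<noteq> 0\<close> \<open>\<Delta> \<noteq> 0\<close> by (rule_tac mult_divide_mult_cancel_left) simp
  finally show ?thesis
    unfolding g0_def using diff by (simp add: P_def Q_def \<Delta>_def)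
qed

lemma frechet_derivative_diagonal:
  fixes G :: "real \<times> real \<Rightarrow> real \<times> real" and r :: "real \<Rightarrow> real"
  assumes "open D" and "(s, t) \<in> D" and "\<And>x. x \<in> D \<Longrightarrow> G x = (r (fst x), r (snd x))"
    and "(r has_real_derivative r1) (at s)" and "(r has_real_derivative r2) (at t)"
  shows "frechet_derivative G (at (s, t)) = (\<lambda>v. (r1 * fst v, r2 * snd v))"
proof -
  have "((\<lambda>x. (r (fst x), r (snd x))) has_derivative (\<lambda>v. (r1 * fst v, r2 * snd v))) (at (s, t))"
    using has_derivative_prod_map[OF assms(4,5)[THEN has_field_derivative_imp_has_derivative]] .
  then have "(G has_derivative (\<lambda>v. (r1 * fst v, r2 * snd v))) (at (s, t))"
    by (rule has_derivative_transform_within_open[OF _ assms(1,2)]) (use assms(3) in simp)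
  then show ?thesis
    by (rule frechet_derivative_at[symmetric])
qed

lemma projective_diagonal_preserves_g0:
  assumes "projective \<phi>" and diag: "\<forall>(x, y)\<in>annulus. \<Phi> (x, y) = (\<phi> x, \<phi> y)"
    and "i \<in> charts" and "j \<in> charts" and D: "open (locdom \<Phi> (i, i) (j, j))"
    and st: "(s, t) \<in> locdom \<Phi> (i, i) (j, j)"
  shows "g0 (locexp \<Phi> (i, i) (j, j) (s, t))
      (frechet_derivative (locexp \<Phi> (i, i) (j, j)) (at (s, t)) v)
      (frechet_derivative (locexp \<Phi> (i, i) (j, j)) (at (s, t)) w)
    = g0 (s, t) v w"
proof -
  obtain a b c d :: real where det: "a * d - b * c \<noteq> 0"
    and dom: "\<And>t. \<phi> (chart_inv i t) \<in> chart_dom j \<longleftrightarrow> c * t + d \<noteq> 0"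
    and val: "\<And>t. c * t + d \<noteq> 0 \<Longrightarrow> chart j (\<phi> (chart_inv i t)) = (a * t + b) / (c * t + d)"
    using projective_in_charts[OF assms(1,3,4)] by metis
  define R where "R u = (a * u + b) / (c * u + d)" for u
  have loc: "locexp \<Phi> (i, i) (j, j) x = (R (fst x), R (snd x))"
    and ne: "c * fst x + d \<noteq> 0" "c * snd x + d \<noteq> 0" "fst x \<noteq> snd x"
    if "x \<in> locdom \<Phi> (i, i) (j, j)" for x
    using locexp_diagonal[OF diag that] dom val by (auto simp: R_def)
  have "frechet_derivative (locexp \<Phi> (i, i) (j, j)) (at (s, t))
      = (\<lambda>v. ((a * d - b * c) / (c * s + d)^2 * fst v, (a * d - b * c) / (c * t + d)^2 * snd v))"
    by (rule frechet_derivative_diagonal[OF D st loc])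
      (use ne[OF st] in \<open>simp_all add: R_def[abs_def] has_real_derivative_linear_fractional\<close>)
  then show ?thesis
    using g0_linear_fractional[OF ne(3)[OF st] ne(1,2)[OF st] det, of "fst v" "snd v" "fst w" "snd w"]
    by (simp add: loc[OF st] R_def)
qed

lemma projective_imp_isometry_A:
  assumes "projective \<phi>" and diag: "\<forall>(x, y)\<in>annulus. \<Phi> (x, y) = (\<phi> x, \<phi> y)"
    and "Ck_diffeo_A k \<Phi>"
  shows "isometry_A \<Phi>"
proof -
  have \<Phi>: "bij_betw \<Phi> annulus annulus" "Ck_map_A k \<Phi>" "Ck_map_A k (inv_into annulus \<Phi>)"
    using assms(3) unfolding Ck_diffeo_A_def by auto
  have "\<forall>(x, y)\<in>annulus. inv_into annulus \<Phi> (x, y) = (inv \<phi> x, inv \<phi> y)"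
    by (rule inv_into_annulus_diagonal[OF projective_bij[OF assms(1)] diag \<Phi>(1)])
  then have "Ck_map_A 1 (inv_into annulus \<Phi>)"
    by (rule Ck_1_map_A_of_diagonal[OF projective_Ck_1[OF projective_inv[OF assms(1)]]])
      (use \<Phi>(3) in \<open>auto simp: Ck_map_A_def\<close>)
  moreover have "Ck_map_A 1 \<Phi>"
    by (rule Ck_1_map_A_of_diagonal[OF projective_Ck_1[OF assms(1)] diag])
      (use \<Phi>(2) in \<open>auto simp: Ck_map_A_def\<close>)
  moreover have "open (locdom \<Phi> (i, i) (j, j))" if "i \<in> charts" "j \<in> charts" for i j
    using \<Phi>(2) that by (auto simp: Ck_map_A_def)
  ultimately show ?thesis
    unfolding isometry_A_def Ck_diffeo_A_def
    using \<Phi>(1) projective_diagonal_preserves_g0[OF assms(1) diag] by fastforce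
qed

section \<open>Functions preserving the de Sitter metric are linear fractional\<close>

lemma sq_shift_eq_two_roots_imp_zero:
  fixes u u' v \<Delta> :: real
  assumes "u \<noteq> u'" and "v \<noteq> 0"
    and "(u - v + u * v * \<Delta>)^2 = (u - v)^2" and "(u' - v + u' * v * \<Delta>)^2 = (u' - v)^2"
    and "u \<noteq> 0" and "u' \<noteq> 0"
  shows "\<Delta> = 0"
proof (rule ccontr)
  assume "\<Delta> \<noteq> 0"
  have "u * v * \<Delta> * (2 * (u - v) + u * v * \<Delta>) = 0"
    and "u' * v * \<Delta> * (2 * (u' - v) + u' * v * \<Delta>) = 0"
    using assms(3,4) by algebra+
  then have "2 * (u - v) + u * v * \<Delta> = 0" and "2 * (u' - v) + u' * v * \<Delta> = 0"
    using assms(2,5,6) \<open>\<Delta> \<noteq> 0\<close> by simp_all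
  then have "(u - u') * (2 + v * \<Delta>) = 0" and "2 * (u - v) + u * v * \<Delta> = 0"
    by algebra+
  then have "v = 0"
    using assms(1) by algebra
  with assms(2) show False ..
qed

locale g0_preserving =
  fixes f f' :: "real \<Rightarrow> real" and U :: "real set"
  assumes open_U: "open U"
    and deriv_f: "\<And>x. x \<in> U \<Longrightarrow> (f has_real_derivative f' x) (at x)"
    and inj_f: "inj_on f U"
    and preserves_g0: "\<And>x z. x \<in> U \<Longrightarrow> z \<in> U \<Longrightarrow> x \<noteq> z \<Longrightarrow> f' x * f' z * (x - z)^2 = (f x - f z)^2"
begin

lemma deriv_nonzero:
  assumes "y \<in> U"
  shows "f' y \<noteq> 0"
proof -
  obtain e where "e > 0" and "ball y e \<subseteq> U"
    using open_U assms open_contains_ball by blast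
  then have x: "y + e / 2 \<in> U" "y + e / 2 \<noteq> y"
    by (auto simp: dist_real_def)
  then have "f (y + e / 2) \<noteq> f y"
    using inj_onD[OF inj_f _ x(1) assms] by blast
  then have "(f (y + e / 2) - f y)^2 \<noteq> 0"
    by simp
  then show ?thesis
    using preserves_g0[OF x(1) assms x(2)] by auto
qed

text \<open>For a linear fractional \<open>f\<close> the function \<open>1 / (f x - f y)\<close> is
  \<open>1 / (f' y * (x - y))\<close> plus a constant; \<open>normalizer y\<close> measures the difference.\<close>

definition normalizer :: "real \<Rightarrow> real \<Rightarrow> real" where
  "normalizer y x = 1 / (f x - f y) - 1 / (f' y * (x - y))"

lemma normalizer_has_derivative_zero:
  assumes "y \<in> U" and "x \<in> U" and "x \<noteq> y"
  shows "(normalizer y has_real_derivative 0) (at x)"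
proof -
  have fxy: "f x - f y \<noteq> 0"
    using inj_f assms by (auto simp: inj_on_def)
  have "f' y * (x - y) \<noteq> 0"
    using deriv_nonzero[OF assms(1)] assms(3) by simp
  then have "(normalizer y has_real_derivative
      - f' x / (f x - f y)^2 + f' y / (f' y * (x - y))^2) (at x)"
    unfolding normalizer_def[abs_def] using deriv_f[OF assms(2)] fxy
    by (auto intro!: derivative_eq_intros simp: power2_eq_square field_simps)
  moreover have "f' x / (f x - f y)^2 = f' y / (f' y * (x - y))^2"
  proof -
    have g0: "(f x - f y)^2 = f' x * (f' y * (x - y)^2)"
      using preserves_g0[OF assms(2,1,3)] by simp
    then have "f' x \<noteq> 0"
      using fxy by auto
    then show ?thesis
      unfolding g0 using deriv_nonzero[OF assms(1)] by (simp add: power2_eq_square)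
  qed
  ultimately show ?thesis
    by simp
qed

lemma normalizer_factor:
  assumes "y \<in> U" and "x \<in> U" and "x \<noteq> y"
  defines "q \<equiv> 1 + f' y * normalizer y x * (x - y)"
  shows "(f x - f y) * q = f' y * (x - y)" and "f' x * q^2 = f' y"
proof -
  have fxy: "f x - f y \<noteq> 0"
    using inj_f assms by (auto simp: inj_on_def)
  have "\<And>a A B :: real. a \<noteq> 0 \<Longrightarrow> A \<noteq> 0 \<Longrightarrow> B \<noteq> 0 \<Longrightarrow> A * (1 + a * (1 / A - 1 / (a * B)) * B) = a * B"
    by (simp add: field_simps)
  then show q: "(f x - f y) * q = f' y * (x - y)"
    using fxy deriv_nonzero[OF assms(1)] assms(3) by (simp add: q_def normalizer_def)
  have "f' y * (x - y)^2 * (f' x * q^2) = (f' x * f' y * (x - y)^2) * q^2"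
    by algebra
  also have "\<dots> = ((f x - f y) * q)^2"
    using preserves_g0[OF assms(2,1,3)] by (simp add: power_mult_distrib)
  also have "\<dots> = f' y * (x - y)^2 * f' y"
    unfolding q by algebra
  finally show "f' x * q^2 = f' y"
    using deriv_nonzero[OF assms(1)] assms(3) by simp
qed

lemma normalizer_pair:
  assumes "y \<in> U" and "x \<in> U" and "z \<in> U" and "x \<noteq> y" and "z \<noteq> y" and "x \<noteq> z"
  shows "(x - z + f' y * (x - y) * (z - y) * (normalizer y z - normalizer y x))^2 = (x - z)^2"
proof -
  define a qx qz where "a = f' y"
    and "qx = 1 + a * normalizer y x * (x - y)" and "qz = 1 + a * normalizer y z * (z - y)"
  note x = normalizer_factor[OF assms(1,2,4), folded a_def, folded qx_def]
  note z = normalizer_factor[OF assms(1,3,5), folded a_def, folded qz_def]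
  have "a^2 * (x - z)^2 = (f' x * qx^2) * (f' z * qz^2) * (x - z)^2"
    using x(2) z(2) by (simp add: power2_eq_square)
  also have "\<dots> = (f' x * f' z * (x - z)^2) * (qx * qz)^2"
    by algebra
  also have "\<dots> = ((f x - f z) * qx * qz)^2"
    using preserves_g0[OF assms(2,3,6)] by (simp add: power_mult_distrib)
  also have "(f x - f z) * qx * qz = a * (x - y) * qz - a * (z - y) * qx"
    using x(1) z(1) by algebra
  also have "\<dots> = a * (x - z + a * (x - y) * (z - y) * (normalizer y z - normalizer y x))"
    unfolding qx_def qz_def by algebra
  finally show ?thesis
    using deriv_nonzero[OF assms(1)] by (simp add: a_def power_mult_distrib)
qed

lemma normalizer_locally_constant:
  assumes "y \<in> U" and "x \<in> U" and "x \<noteq> y"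
  obtains e where "e > 0" and "\<And>z. \<bar>z - x\<bar> < e \<Longrightarrow> z \<in> U \<and> z \<noteq> y \<and> normalizer y z = normalizer y x"
proof -
  obtain e where "e > 0" and e: "ball x e \<subseteq> U - {y}"
    using open_U assms open_contains_ball[of "U - {y}"] by (auto simp: open_Diff)
  have "normalizer y z = normalizer y x" if "\<bar>z - x\<bar> < e" for z
  proof (rule DERIV_isconst3[of "x - e" "x + e" z x "normalizer y"])
    fix t assume "t \<in> {x - e<..<x + e}"
    then have "t \<in> ball x e"
      by (auto simp: dist_real_def)
    then have "t \<in> U" "t \<noteq> y"
      using e by auto
    then show "(normalizer y has_real_derivative 0) (at t)"
      by (rule normalizer_has_derivative_zero[OF assms(1)])
  qed (use that \<open>e > 0\<close> in auto)
  moreover have "z \<in> U" "z \<noteq> y" if "\<bar>z - x\<bar> < e" for z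
  proof -
    have "z \<in> ball x e"
      using that by (auto simp: dist_real_def)
    then show "z \<in> U" "z \<noteq> y"
      using e by auto
  qed
  ultimately show ?thesis
    using that \<open>e > 0\<close> by blast
qed

text \<open>\<open>U - {y}\<close> need not be connected, so local constancy alone does not suffice:
  comparing two nearby points with a third one pins the normalizer down.\<close>

lemma normalizer_constant:
  assumes "y \<in> U" and "x \<in> U" and "z \<in> U" and "x \<noteq> y" and "z \<noteq> y"
  shows "normalizer y x = normalizer y z"
proof (cases "x = z")
  case False
  obtain e where "e > 0" and e: "\<And>t. \<bar>t - x\<bar> < e \<Longrightarrow> t \<in> U \<and> t \<noteq> y \<and> normalizer y t = normalizer y x"
    using normalizer_locally_constant[OF assms(1,2,4)] by blast
  define x' where "x' = (if x + e / 2 = z then x - e / 2 else x + e / 2)"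
  have x': "x' \<in> U" "x' \<noteq> y" "normalizer y x' = normalizer y x" "x' \<noteq> z" "x' \<noteq> x"
    using e[of x'] \<open>e > 0\<close> by (auto simp: x'_def)
  have "f' y * (normalizer y z - normalizer y x) = 0"
  proof (rule sq_shift_eq_two_roots_imp_zero[where u = "x - y" and u' = "x' - y" and v = "z - y"])
    show "(x - y - (z - y) + (x - y) * (z - y) * (f' y * (normalizer y z - normalizer y x)))^2
        = (x - y - (z - y))^2"
      using normalizer_pair[OF assms(1,2,3,4,5) False] by (simp add: algebra_simps)
    show "(x' - y - (z - y) + (x' - y) * (z - y) * (f' y * (normalizer y z - normalizer y x)))^2
        = (x' - y - (z - y))^2"
      using normalizer_pair[OF assms(1) x'(1) assms(3) x'(2) assms(5) x'(4)] x'(3)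
      by (simp add: algebra_simps)
  qed (use x' assms in auto)
  then show ?thesis
    using deriv_nonzero[OF assms(1)] by simp
qed simp

theorem ex_linear_fractional:
  "\<exists>a b c d. a * d - b * c \<noteq> 0 \<and> (\<forall>x\<in>U. c * x + d \<noteq> 0 \<and> f x = (a * x + b) / (c * x + d))"
proof (cases "U = {}")
  case True
  then show ?thesis
    by (intro exI[of _ 1] exI[of _ 0]) simp
next
  case False
  then obtain y where y: "y \<in> U"
    by blast
  define a where "a = f' y"
  obtain K where K: "\<And>x. x \<in> U \<Longrightarrow> x \<noteq> y \<Longrightarrow> normalizer y x = K"
    using normalizer_constant[OF y] by metis
  have c_x: "1 + a * K * (x - y) \<noteq> 0 \<and> f x = (f y * (1 + a * K * (x - y)) + a * (x - y)) / (1 + a * K * (x - y))"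
    if "x \<in> U" for x
  proof (cases "x = y")
    case False
    have eq: "(f x - f y) * (1 + a * K * (x - y)) = a * (x - y)"
      using normalizer_factor(1)[OF y that False] K[OF that False] by (simp add: a_def)
    moreover have "a * (x - y) \<noteq> 0"
      using deriv_nonzero[OF y] False by (simp add: a_def)
    ultimately have "1 + a * K * (x - y) \<noteq> 0"
      by auto
    moreover have "f x * (1 + a * K * (x - y)) = f y * (1 + a * K * (x - y)) + a * (x - y)"
      using eq by algebra
    ultimately show ?thesis
      by (simp add: eq_divide_eq)
  qed simp
  show ?thesis
  proof (intro exI conjI ballI)
    show "(f y * a * K + a) * (1 - a * K * y) - (f y * (1 - a * K * y) - a * y) * (a * K) \<noteq> 0"
      using deriv_nonzero[OF y] by (simp add: a_def algebra_simps)
    fix x assume "x \<in> U"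
    then show "a * K * x + (1 - a * K * y) \<noteq> 0"
      and "f x = ((f y * a * K + a) * x + (f y * (1 - a * K * y) - a * y)) / (a * K * x + (1 - a * K * y))"
      using c_x[OF \<open>x \<in> U\<close>] by (simp_all add: algebra_simps)
  qed
qed

end

section \<open>Isometries are projective\<close>

lemma isometry_A_diagonal_g0_preserving:
  assumes iso: "isometry_A \<Phi>" and diag: "\<forall>(x, y)\<in>annulus. \<Phi> (x, y) = (\<phi> x, \<phi> y)"
  defines "f \<equiv> \<lambda>u. chart 0 (\<phi> (Some u))"
  shows "g0_preserving f (deriv f) {u. \<phi> (Some u) \<noteq> None}"
proof -
  let ?U = "{u. \<phi> (Some u) \<noteq> None}"
  have \<Phi>: "Ck_map_A 1 \<Phi>"
    using iso by (simp add: isometry_A_def Ck_diffeo_A_def)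
  then have "inj \<phi>"
    using diag by (intro inj_of_diagonal) (auto simp: Ck_map_A_def)
  have chart0: "0 \<in> charts" "chart_inv 0 u = Some u" "p \<in> chart_dom 0 \<longleftrightarrow> p \<noteq> None" for u p
    by (cases p) (auto simp: charts_def chart_inv_def chart_dom_def)
  have "open ?U" and "Ck 1 f ?U"
    using Ck_map_rp1_affine_chart[OF Ck_map_rp1_of_diagonal[OF \<Phi> diag] chart0(1)]
    by (simp_all only: chart0(3) f_def)
  then have deriv: "(f has_real_derivative deriv f u) (at u)" if "u \<in> ?U" for u
    using that by (simp add: Ck.simps One_nat_def DERIV_deriv_iff_real_differentiable)
  have f: "\<phi> (Some u) = Some (f u)" if "u \<in> ?U" for u
    using that by (auto simp: f_def chart_def)
  have inj: "inj_on f ?U"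
  proof
    fix x z assume "x \<in> ?U" "z \<in> ?U" "f x = f z"
    then have "\<phi> (Some x) = \<phi> (Some z)"
      using f[of x] f[of z] by simp
    then show "x = z"
      using \<open>inj \<phi>\<close> by (auto simp: inj_def)
  qed
  have g0_identity: "\<forall>st\<in>locdom \<Phi> (0, 0) (0, 0). \<forall>v w. g0 (locexp \<Phi> (0, 0) (0, 0) st)
      (frechet_derivative (locexp \<Phi> (0, 0) (0, 0)) (at st) v)
      (frechet_derivative (locexp \<Phi> (0, 0) (0, 0)) (at st) w) = g0 st v w"
    using iso chart0(1) unfolding isometry_A_def by blast
  define D where "D = locdom \<Phi> (0, 0) (0, 0)"
  have "open D"
    using \<Phi> chart0(1) by (simp add: Ck_map_A_def D_def)
  have loc: "locexp \<Phi> (0, 0) (0, 0) x = (f (fst x), f (snd x))" if "x \<in> D" for x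
    using locexp_diagonal(1)[OF diag that[unfolded D_def]] by (simp add: chart0 f_def)
  have "deriv f x * deriv f z * (x - z)^2 = (f x - f z)^2"
    if x: "x \<in> ?U" and z: "z \<in> ?U" and "x \<noteq> z" for x z
  proof -
    have xz: "(x, z) \<in> D"
      unfolding D_def using mem_locdom_diagonal[OF diag \<open>inj \<phi>\<close>] x z \<open>x \<noteq> z\<close> by (simp add: chart0)
    have "frechet_derivative (locexp \<Phi> (0, 0) (0, 0)) (at (x, z))
        = (\<lambda>v. (deriv f x * fst v, deriv f z * snd v))"
      by (rule frechet_derivative_diagonal[OF \<open>open D\<close> xz loc deriv[OF x] deriv[OF z]])
    moreover have "g0 (locexp \<Phi> (0, 0) (0, 0) (x, z))
        (frechet_derivative (locexp \<Phi> (0, 0) (0, 0)) (at (x, z)) (1, 0))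
        (frechet_derivative (locexp \<Phi> (0, 0) (0, 0)) (at (x, z)) (0, 1))
      = g0 (x, z) (1, 0) (0, 1)"
      using g0_identity xz unfolding D_def by blast
    ultimately have "deriv f x * deriv f z / (f x - f z)^2 = 1 / (x - z)^2"
      by (simp add: loc[OF xz] g0_def)
    moreover have "f x \<noteq> f z"
      using inj x z \<open>x \<noteq> z\<close> by (auto simp: inj_on_def)
    ultimately show ?thesis
      using \<open>x \<noteq> z\<close> by (simp add: field_simps)
  qed
  then show ?thesis
    using \<open>open ?U\<close> deriv inj by (simp add: g0_preserving_def)
qed

lemma isCont_eq_off_point:
  fixes g h :: "real \<Rightarrow> 'a::t2_space"
  assumes "isCont g p" and "isCont h p" and "\<And>t. t \<noteq> p \<Longrightarrow> g t = h t"
  shows "g p = h p"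
proof -
  have "h \<midarrow>p\<rightarrow> g p"
    using assms(1,3) LIM_equal[of p g h] by (simp add: isCont_def)
  then show ?thesis
    using assms(2) LIM_unique by (auto simp: isCont_def)
qed

lemma Ck_map_rp1_isCont:
  assumes "Ck_map_rp1 k \<phi>" and "j \<in> charts" and "\<phi> (Some p) \<in> chart_dom j"
  shows "isCont (\<lambda>t. chart j (\<phi> (Some t))) p"
  using Ck_map_rp1_affine_chart[OF assms(1,2)] Ck_imp_continuous_on assms(3)
    continuous_on_eq_continuous_at by blast

lemma Ck_map_rp1_eq_off_point:
  assumes "Ck_map_rp1 k \<phi>" and "Ck_map_rp1 k' \<psi>" and "\<And>t. t \<noteq> p \<Longrightarrow> \<phi> (Some t) = \<psi> (Some t)"
  shows "\<phi> (Some p) = \<psi> (Some p)"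
proof -
  obtain j where j: "j \<in> charts" "\<phi> (Some p) \<in> chart_dom j" "\<psi> (Some p) \<in> chart_dom j"
    using ex_common_chart_dom by blast
  have "chart j (\<phi> (Some p)) = chart j (\<psi> (Some p))"
    using isCont_eq_off_point[OF Ck_map_rp1_isCont[OF assms(1) j(1,2)] Ck_map_rp1_isCont[OF assms(2) j(1,3)]]
      assms(3) by simp
  then show ?thesis
    using chart_inj_on[OF j(1)] j(2,3) by (auto simp: inj_on_def)
qed

lemma bij_eq_off_point:
  assumes "bij f" and "bij g" and "\<And>x. x \<noteq> q \<Longrightarrow> f x = g x"
  shows "f = g"
proof
  fix x
  obtain r where r: "g r = f q"
    using bij_is_surj[OF assms(2)] by (metis surjD)
  have "r = q"
  proof (rule ccontr)
    assume "r \<noteq> q"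
    then have "f r = f q"
      using assms(3) r by simp
    then show False
      using \<open>r \<noteq> q\<close> bij_is_inj[OF assms(1)] by (auto simp: inj_def)
  qed
  then show "f x = g x"
    using assms(3) r by (cases "x = q") auto
qed

lemma isometry_A_imp_projective:
  assumes "bij \<phi>" and diag: "\<forall>(x, y)\<in>annulus. \<Phi> (x, y) = (\<phi> x, \<phi> y)" and "isometry_A \<Phi>"
  shows "projective \<phi>"
proof -
  define f where "f u = chart 0 (\<phi> (Some u))" for u
  define U where "U = {u. \<phi> (Some u) \<noteq> None}"
  interpret g0_preserving f "deriv f" U
    unfolding f_def U_def by (rule isometry_A_diagonal_g0_preserving[OF assms(3) diag])
  obtain a b c d where det: "a * d - b * c \<noteq> 0"
    and f: "\<And>x. x \<in> U \<Longrightarrow> c * x + d \<noteq> 0 \<and> f x = (a * x + b) / (c * x + d)"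
    using ex_linear_fractional by blast
  define M where "M = mobius a b c d"
  have "projective M"
    unfolding M_def using det by (rule projective_mobius)
  have on_U: "\<phi> (Some u) = M (Some u)" if "u \<in> U" for u
    using that f[OF that] by (auto simp: U_def M_def mobius_def f_def chart_def)
  obtain p where p: "\<And>u. u \<noteq> p \<Longrightarrow> u \<in> U"
  proof (cases "U = UNIV")
    case False
    then obtain p where "\<phi> (Some p) = None"
      by (auto simp: U_def)
    moreover have "\<phi> (Some u) \<noteq> \<phi> (Some p)" if "u \<noteq> p" for u
      using that bij_is_inj[OF assms(1)] by (auto simp: inj_def)
    ultimately have "u \<in> U" if "u \<noteq> p" for u
      using that by (simp add: U_def)
    then show ?thesis
      using that by blast
  qed (use that in blast)
  have "Ck_map_rp1 1 \<phi>"
    using assms(3) diag Ck_map_rp1_of_diagonal by (auto simp: isometry_A_def Ck_diffeo_A_def)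
  then have "\<phi> (Some p) = M (Some p)"
    by (rule Ck_map_rp1_eq_off_point[OF _ projective_Ck_1[OF \<open>projective M\<close>]]) (use on_U p in blast)
  then have "\<phi> (Some u) = M (Some u)" for u
    using on_U p by (cases "u = p") auto
  then have "\<phi> x = M x" if "x \<noteq> None" for x
    using that by auto
  then have "\<phi> = M"
    using bij_eq_off_point[OF assms(1) projective_bij[OF \<open>projective M\<close>]] by blast
  then show ?thesis
    using \<open>projective M\<close> by simp
qed

theorem mainTheorem12:
  fixes k :: nat and \<Phi> :: "rp1 \<times> rp1 \<Rightarrow> rp1 \<times> rp1"
  assumes "Ck_split_map k \<Phi>"
  shows "\<exists>\<phi>. Ck_diffeo_rp1 k \<phi> \<and> (\<forall>(x, y)\<in>annulus. \<Phi> (x, y) = (\<phi> x, \<phi> y)) \<and>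
             (isometry_A \<Phi> \<longleftrightarrow> projective \<phi>)"
proof -
  have "split_map \<Phi>" and \<Phi>: "Ck_diffeo_A k \<Phi>"
    using assms by (auto simp: Ck_split_map_def)
  then obtain \<phi> where "bij \<phi>" and diag: "\<forall>(x, y)\<in>annulus. \<Phi> (x, y) = (\<phi> x, \<phi> y)"
    using split_map_diagonal by blast
  have inv_diag: "\<forall>(x, y)\<in>annulus. inv_into annulus \<Phi> (x, y) = (inv \<phi> x, inv \<phi> y)"
    using inv_into_annulus_diagonal[OF \<open>bij \<phi>\<close> diag] \<Phi> by (simp add: Ck_diffeo_A_def)
  have "Ck_diffeo_rp1 k \<phi>"
    using \<open>bij \<phi>\<close> Ck_map_rp1_of_diagonal[OF _ diag] Ck_map_rp1_of_diagonal[OF _ inv_diag] \<Phi>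
    by (simp add: Ck_diffeo_rp1_def Ck_diffeo_A_def)
  moreover have "isometry_A \<Phi> \<longleftrightarrow> projective \<phi>"
    using isometry_A_imp_projective[OF \<open>bij \<phi>\<close> diag] projective_imp_isometry_A[OF _ diag \<Phi>] by blast
  ultimately show ?thesis
    using diag by blast
qed

end
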